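(* Let $l<u$ be real, $D=[l,u]$, $b>0$, and let $\Delta Q$ be a real number with $0<\Delta Q\le u-l$. For $p\in D$ let $C_p=\int_l^u\frac{1}{2b}e^{-\frac{|x-p|}{b}}\,dx$. Then $$\max_{\substack{q,q'\in D\\ |q'-q|\le \Delta Q}} \frac{C_{q'}}{C_q}\,e^{\frac{|q'-q|}{b}} = \frac{C_{l+\Delta Q}}{C_l}\,e^{\frac{\Delta Q}{b}}.$$
   Context: Equivalently $C_p = 1-\frac{1}{2}\left(e^{-\frac{p-l}{b}}+e^{-\frac{u-p}{b}}\right)$ for $p\in D$. *)

theory Defs
  imports "HOL-Analysis.Analysis"
begin

definition laplace_mass :: "real \<Rightarrow> real \<Rightarrow> real \<Rightarrow> real \<Rightarrow> real" where
  "laplace_mass l u b p = integral {l..u} (\<lambda>x. 1 / (2 * b) * exp (- \<bar>x - p\<bar> / b))"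

end

theory Submission
  imports Defs
begin

text \<open>On \<open>[l, u]\<close> the mass is \<open>C p = 1 - (exp (-(p - l)/b) + exp (-(u - p)/b)) / 2\<close>.
  For \<open>q \<le> q'\<close> the ratio \<open>C q' / C q\<close> is at most \<open>C (l + (q' - q)) / C l\<close>, a polynomial
  inequality in exponential coordinates whose defect factors as \<open>(1 - x) (1 - y) (\<dots>)\<close>; the
  case \<open>q' < q\<close> reduces to it by the reflection \<open>p \<mapsto> l + u - p\<close>, which preserves \<open>C\<close>.
  So the objective is at most \<open>C (l + d) / C l * exp (d/b)\<close> with \<open>d = |q' - q|\<close>, and this
  bound is nondecreasing in \<open>d\<close>, hence maximal at \<open>d = \<Delta>Q\<close>, where it is attained by
  \<open>q = l\<close>, \<open>q' = l + \<Delta>Q\<close>.\<close>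

lemma has_integral_exp_shifted:
  fixes a c p s :: real
  assumes "s \<noteq> 0" "a \<le> c"
  shows "((\<lambda>x. exp ((x - p) / s)) has_integral s * (exp ((c - p) / s) - exp ((a - p) / s))) {a..c}"
proof -
  have "((\<lambda>x. s * exp ((x - p) / s)) has_vector_derivative exp ((x - p) / s)) (at x within {a..c})" for x
    unfolding has_real_derivative_iff_has_vector_derivative[symmetric]
    using assms by (auto intro!: derivative_eq_intros)
  from fundamental_theorem_of_calculus[OF assms(2) this] show ?thesis
    by (simp add: right_diff_distrib)
qed

lemma laplace_density_has_integral_left:
  fixes l p b :: real
  assumes "b > 0" "l \<le> p"
  shows "((\<lambda>x. 1 / (2 * b) * exp (- \<bar>x - p\<bar> / b)) has_integral (1 - exp (- (p - l) / b)) / 2) {l..p}"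
proof -
  have "((\<lambda>x. 1 / (2 * b) * exp ((x - p) / b)) has_integral (1 - exp (- (p - l) / b)) / 2) {l..p}"
    using has_integral_mult_right[OF has_integral_exp_shifted[of b l p p], of "1 / (2 * b)"] assms
    by (simp add: minus_diff_eq)
  then show ?thesis
    by (rule has_integral_eq[rotated]) simp
qed

lemma laplace_density_has_integral_right:
  fixes u p b :: real
  assumes "b > 0" "p \<le> u"
  shows "((\<lambda>x. 1 / (2 * b) * exp (- \<bar>x - p\<bar> / b)) has_integral (1 - exp (- (u - p) / b)) / 2) {p..u}"
proof -
  have integral_value: "1 / (2 * b) * (- b * (exp ((u - p) / - b) - exp ((p - p) / - b)))
      = (1 - exp (- (u - p) / b)) / 2"
    using assms by (simp add: minus_divide_left)
  have "((\<lambda>x. 1 / (2 * b) * exp ((x - p) / - b)) has_integral (1 - exp (- (u - p) / b)) / 2) {p..u}"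
    using has_integral_mult_right[OF has_integral_exp_shifted[of "- b" p u p], of "1 / (2 * b)"] assms
    unfolding integral_value by simp
  then show ?thesis
    by (rule has_integral_eq[rotated]) (simp add: minus_divide_left)
qed

lemma laplace_mass_eq:
  fixes l u b p :: real
  assumes "b > 0" "l \<le> p" "p \<le> u"
  shows "laplace_mass l u b p = 1 - (exp (- (p - l) / b) + exp (- (u - p) / b)) / 2"
proof -
  have "laplace_mass l u b p = (1 - exp (- (p - l) / b)) / 2 + (1 - exp (- (u - p) / b)) / 2"
    unfolding laplace_mass_def
    by (intro integral_unique has_integral_combine[OF assms(2,3)] laplace_density_has_integral_left
        laplace_density_has_integral_right assms)
  then show ?thesis by argo
qed

text \<open>With \<open>x = exp (-(q - l)/b)\<close>, \<open>y = exp (-(q' - q)/b)\<close> and \<open>E = exp (-(u - l)/b)\<close>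
  this is \<open>C q' * C l \<le> C (l + (q' - q)) * C q\<close>, up to a factor 4.\<close>

lemma cross_product_ineq:
  fixes x y E :: real
  assumes "0 < x" "x \<le> 1" "0 < y" "y \<le> 1" "0 < E" "E \<le> x * y"
  shows "(2 - x * y - E / (x * y)) * (1 - E) \<le> (2 - y - E / y) * (2 - x - E / x)"
proof -
  have "x * y \<le> 1"
    using assms mult_le_one[of x y] by simp
  have last_factor_nonneg: "0 \<le> 2 * x * y - E * (x + y + x * y - 1)"
  proof (cases "x + y + x * y - 1 \<le> 0")
    case True
    then show ?thesis
      using assms by (smt (verit) mult_nonneg_nonpos mult_pos_pos)
  next
    case False
    then have "E * (x + y + x * y - 1) \<le> (x * y) * (x + y + x * y - 1)"
      using assms by (intro mult_right_mono) auto
    also have "\<dots> \<le> (x * y) * 2"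
      using assms \<open>x * y \<le> 1\<close> by (intro mult_left_mono) auto
    finally show ?thesis by simp
  qed
  have "(2 * y - y\<^sup>2 - E) * (2 * x - x\<^sup>2 - E) - (2 * x * y - x\<^sup>2 * y\<^sup>2 - E) * (1 - E)
      = (1 - x) * (1 - y) * (2 * x * y - E * (x + y + x * y - 1))"
    by (simp add: algebra_simps power2_eq_square)
  also have "\<dots> \<ge> 0"
    using assms last_factor_nonneg by simp
  finally have "(2 * x * y - x\<^sup>2 * y\<^sup>2 - E) * (1 - E) / (x * y)
      \<le> (2 * y - y\<^sup>2 - E) * (2 * x - x\<^sup>2 - E) / (x * y)"
    using assms by (intro divide_right_mono) auto
  then show ?thesis
    using assms by (simp add: field_simps power2_eq_square)
qed

locale laplace_interval =
  fixes l u b :: real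
  assumes lower_less_upper: "l < u" and scale_pos: "b > 0"
begin

abbreviation C :: "real \<Rightarrow> real" where
  "C \<equiv> laplace_mass l u b"

lemma mass_eq:
  "l \<le> p \<Longrightarrow> p \<le> u \<Longrightarrow> C p = 1 - (exp (- (p - l) / b) + exp (- (u - p) / b)) / 2"
  using laplace_mass_eq scale_pos by blast

lemma mass_pos:
  assumes "l \<le> p" "p \<le> u"
  shows "C p > 0"
proof -
  have "exp (- (p - l) / b) \<le> 1" "exp (- (u - p) / b) \<le> 1"
    using assms scale_pos by (auto simp: divide_nonpos_pos)
  moreover have "exp (- (p - l) / b) < 1 \<or> exp (- (u - p) / b) < 1"
    using assms lower_less_upper scale_pos by (cases "p = l") (auto simp: divide_neg_pos)
  ultimately show ?thesis
    using mass_eq[OF assms] by argo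
qed

lemma mass_reflect:
  "l \<le> p \<Longrightarrow> p \<le> u \<Longrightarrow> C (l + u - p) = C p"
  by (simp add: mass_eq algebra_simps)

lemma mass_eq_exp_coord:
  assumes "l \<le> p" "p \<le> u"
  shows "C p = (2 - exp (- (p - l) / b) - exp (- (u - l) / b) / exp (- (p - l) / b)) / 2"
proof -
  have "exp (- (u - p) / b) = exp (- (u - l) / b) / exp (- (p - l) / b)"
    unfolding exp_diff[symmetric] by (simp add: diff_divide_distrib)
  from mass_eq[OF assms, unfolded this] show ?thesis
    by argo
qed

lemma mass_ratio_le_of_le:
  assumes "l \<le> q" "q \<le> q'" "q' \<le> u"
  shows "C q' / C q \<le> C (l + (q' - q)) / C l"
proof -
  define x where "x = exp (- (q - l) / b)"
  define y where "y = exp (- (q' - q) / b)"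
  define E where "E = exp (- (u - l) / b)"
  have x: "0 < x" "x \<le> 1" and y: "0 < y" "y \<le> 1"
    using assms scale_pos by (auto simp: x_def y_def divide_nonpos_pos)
  have xy: "exp (- (q' - l) / b) = x * y"
    unfolding x_def y_def exp_add[symmetric] by (simp add: diff_divide_distrib)
  have y': "exp (- (l + (q' - q) - l) / b) = y"
    by (simp add: y_def)
  have "E \<le> x * y"
    unfolding xy[symmetric] E_def using assms scale_pos by (auto simp: divide_simps)
  have Cq': "C q' = (2 - x * y - E / (x * y)) / 2"
    using mass_eq_exp_coord[of q', unfolded xy E_def[symmetric]] assms by simp
  have Cd: "C (l + (q' - q)) = (2 - y - E / y) / 2"
    using mass_eq_exp_coord[of "l + (q' - q)", unfolded y' E_def[symmetric]] assms by simp
  have Cq: "C q = (2 - x - E / x) / 2"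
    using mass_eq_exp_coord[of q, unfolded x_def[symmetric] E_def[symmetric]] assms by simp
  have Cl: "C l = (1 - E) / 2"
    using mass_eq_exp_coord[of l, unfolded E_def[symmetric]] lower_less_upper by simp
  have "C q' * C l = (2 - x * y - E / (x * y)) * (1 - E) / 4"
    unfolding Cq' Cl by simp
  also have "\<dots> \<le> (2 - y - E / y) * (2 - x - E / x) / 4"
    using cross_product_ineq[OF x y _ \<open>E \<le> x * y\<close>] by (simp add: E_def)
  also have "\<dots> = C (l + (q' - q)) * C q"
    unfolding Cd Cq by simp
  finally show ?thesis
    using assms lower_less_upper mass_pos[of q] mass_pos[of l] by (simp add: divide_simps)
qed

lemma mass_ratio_le:
  assumes "l \<le> q" "q \<le> u" "l \<le> q'" "q' \<le> u"
  shows "C q' / C q \<le> C (l + \<bar>q' - q\<bar>) / C l"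
proof (cases "q \<le> q'")
  case True
  then show ?thesis
    using mass_ratio_le_of_le assms by simp
next
  case False
  then have "C (l + u - q') / C (l + u - q) \<le> C (l + ((l + u - q') - (l + u - q))) / C l"
    using assms by (intro mass_ratio_le_of_le) auto
  then show ?thesis
    using False assms by (simp add: mass_reflect)
qed

lemma mass_shift_exp_mono:
  assumes "0 \<le> d" "d \<le> d'" "d' \<le> u - l"
  shows "C (l + d) * exp (d / b) \<le> C (l + d') * exp (d' / b)"
proof -
  define E where "E = exp (- (u - l) / b)"
  have closed_form: "C (l + t) * exp (t / b) = exp (t / b) - 1 / 2 - E * exp (t / b) ^ 2 / 2"
    if "0 \<le> t" "t \<le> u - l" for t
  proof -
    define z where "z = exp (t / b)"
    have "exp (- (u - (l + t)) / b) = E * z"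
      unfolding E_def z_def exp_add[symmetric] by (simp add: add_divide_distrib diff_divide_distrib)
    moreover have "exp (- (l + t - l) / b) = 1 / z"
      by (simp add: z_def exp_minus inverse_eq_divide)
    ultimately have "C (l + t) = 1 - (1 / z + E * z) / 2"
      using that mass_eq[of "l + t"] by simp
    moreover have "z > 0"
      by (simp add: z_def)
    ultimately show ?thesis
      unfolding z_def[symmetric] by (simp add: field_simps power2_eq_square)
  qed
  define s t where "s = exp (d / b)" and "t = exp (d' / b)"
  have "0 < s" "s \<le> t"
    using assms scale_pos by (auto simp: s_def t_def divide_right_mono)
  moreover have "E * t \<le> 1"
    using assms scale_pos unfolding E_def t_def exp_add[symmetric] by (simp add: divide_simps)
  ultimately have "(t - s) * (2 - E * t - E * s) \<ge> 0"
    by (smt (verit) E_def exp_gt_zero mult_left_mono mult_nonneg_nonneg)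
  then have "s - 1 / 2 - E * s ^ 2 / 2 \<le> t - 1 / 2 - E * t ^ 2 / 2"
    by (simp add: algebra_simps power2_eq_square)
  then show ?thesis
    unfolding s_def t_def using closed_form[of d] closed_form[of d'] assms by simp
qed

end

theorem lemma3p2:
  fixes l u b dQ :: real
  assumes "l < u" and "b > 0" and "0 < dQ" and "dQ \<le> u - l"
  defines "C \<equiv> laplace_mass l u b"
  shows "(GREATEST v. v \<in> {C q' / C q * exp (\<bar>q' - q\<bar> / b) | q q'.
              q \<in> {l..u} \<and> q' \<in> {l..u} \<and> \<bar>q' - q\<bar> \<le> dQ})
         = C (l + dQ) / C l * exp (dQ / b)"
proof (rule Greatest_equality)
  interpret laplace_interval l u b
    using assms by unfold_locales
  show "C (l + dQ) / C l * exp (dQ / b) \<in> {C q' / C q * exp (\<bar>q' - q\<bar> / b) | q q'.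
              q \<in> {l..u} \<and> q' \<in> {l..u} \<and> \<bar>q' - q\<bar> \<le> dQ}"
    using assms by (intro CollectI exI[of _ l] exI[of _ "l + dQ"]) auto
  fix v
  assume "v \<in> {C q' / C q * exp (\<bar>q' - q\<bar> / b) | q q'.
              q \<in> {l..u} \<and> q' \<in> {l..u} \<and> \<bar>q' - q\<bar> \<le> dQ}"
  then obtain q q' where v: "v = C q' / C q * exp (\<bar>q' - q\<bar> / b)"
    and q: "l \<le> q" "q \<le> u" "l \<le> q'" "q' \<le> u" and dist: "\<bar>q' - q\<bar> \<le> dQ"
    by auto
  have "v \<le> C (l + \<bar>q' - q\<bar>) / C l * exp (\<bar>q' - q\<bar> / b)"
    unfolding v C_def using mass_ratio_le[OF q] by (intro mult_right_mono) auto
  also have "\<dots> = C (l + \<bar>q' - q\<bar>) * exp (\<bar>q' - q\<bar> / b) / C l"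
    by simp
  also have "\<dots> \<le> C (l + dQ) * exp (dQ / b) / C l"
    unfolding C_def using mass_shift_exp_mono[of "\<bar>q' - q\<bar>" dQ] dist assms mass_pos[of l]
    by (intro divide_right_mono) auto
  finally show "v \<le> C (l + dQ) / C l * exp (dQ / b)"
    by simp
qed

end
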